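(* For every state $\rho$ on $\mathbb{C}^M\otimes\mathbb{C}^N$ and all unitaries $U_1$ on $\mathbb{C}^M$ and $U_2$ on $\mathbb{C}^N$, $d_{\max}\big((U_1\otimes U_2)\rho(U_1\otimes U_2)^\dagger\big)=d_{\max}(\rho)$.
   Context: For a state $\rho$ on $\mathbb{C}^M\otimes\mathbb{C}^N$ let $\rho_B=\mathrm{Tr}_A(\rho)$. A unitary $U^B$ on $\mathbb{C}^N$ is called cyclic for $\rho$ if $[\rho_B,U^B]=0$. Set $\rho_f=(I\otimes U^B)\rho(I\otimes U^{B\dagger})$ and define the Fu distance $d(\rho,U^B)=\frac{1}{\sqrt2}\|\rho-\rho_f\|_F$ (Frobenius norm $\|X\|_F=\sqrt{\mathrm{Tr}(X^\dagger X)}$). Define $d_{\max}(\rho)=\max\{d(\rho,U^B): U^B \text{ unitary},\ [\rho_B,U^B]=0\}$. *)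

theory Defs
  imports "Jordan_Normal_Form.Matrix"
begin

definition dagger :: "complex mat \<Rightarrow> complex mat" where
  "dagger A = mat (dim_col A) (dim_row A) (\<lambda>(i,j). cnj (A $$ (j,i)))"

definition unitary :: "nat \<Rightarrow> complex mat \<Rightarrow> bool" where
  "unitary n U \<longleftrightarrow> U \<in> carrier_mat n n \<and> U * dagger U = 1\<^sub>m n \<and> dagger U * U = 1\<^sub>m n"

definition tr :: "complex mat \<Rightarrow> complex" where
  "tr A = (\<Sum>i<dim_row A. A $$ (i,i))"

(* Kronecker product, basis of C^M \<otimes> C^N indexed by i*N + k, i<M, k<N *)
definition kron :: "complex mat \<Rightarrow> complex mat \<Rightarrow> complex mat" where
  "kron A B = mat (dim_row A * dim_row B) (dim_col A * dim_col B)
     (\<lambda>(i,j). A $$ (i div dim_row B, j div dim_col B) * B $$ (i mod dim_row B, j mod dim_col B))"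

definition ptrace_A :: "nat \<Rightarrow> nat \<Rightarrow> complex mat \<Rightarrow> complex mat" where
  "ptrace_A M N \<rho> = mat N N (\<lambda>(k,l). \<Sum>i<M. \<rho> $$ (i*N + k, i*N + l))"

definition is_state :: "nat \<Rightarrow> nat \<Rightarrow> complex mat \<Rightarrow> bool" where
  "is_state M N \<rho> \<longleftrightarrow> \<rho> \<in> carrier_mat (M*N) (M*N) \<and> dagger \<rho> = \<rho> \<and>
     (\<forall>v \<in> carrier_vec (M*N). Re (v \<bullet>c (\<rho> *\<^sub>v v)) \<ge> 0 \<and> Im (v \<bullet>c (\<rho> *\<^sub>v v)) = 0) \<and>
     tr \<rho> = 1"

definition frob :: "complex mat \<Rightarrow> real" where
  "frob X = sqrt (\<Sum>i<dim_row X. \<Sum>j<dim_col X. (cmod (X $$ (i,j)))\<^sup>2)"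

definition fu_dist :: "nat \<Rightarrow> nat \<Rightarrow> complex mat \<Rightarrow> complex mat \<Rightarrow> real" where
  "fu_dist M N \<rho> UB =
     (let W = kron (1\<^sub>m M) UB in frob (\<rho> - W * \<rho> * dagger W) / sqrt 2)"

definition cyclic_unitary :: "nat \<Rightarrow> nat \<Rightarrow> complex mat \<Rightarrow> complex mat \<Rightarrow> bool" where
  "cyclic_unitary M N \<rho> UB \<longleftrightarrow> unitary N UB \<and>
     ptrace_A M N \<rho> * UB = UB * ptrace_A M N \<rho>"

(* d_max (the maximum is attained by compactness; written as a supremum) *)
definition d_max :: "nat \<Rightarrow> nat \<Rightarrow> complex mat \<Rightarrow> real" where
  "d_max M N \<rho> = Sup {fu_dist M N \<rho> UB | UB. cyclic_unitary M N \<rho> UB}"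

end

theory Submission
  imports Defs
begin

text \<open>Let \<open>W = U1 \<otimes> U2\<close>. Conjugating \<open>\<rho>\<close> by \<open>W\<close> conjugates the reduced state \<open>\<rho>_B\<close> by \<open>U2\<close>,
  so \<open>V \<mapsto> U2 V U2\<^sup>\<dagger>\<close> sends unitaries cyclic for \<open>\<rho>\<close> to unitaries cyclic for \<open>W \<rho> W\<^sup>\<dagger>\<close>.
  Since \<open>I \<otimes> U2 V U2\<^sup>\<dagger> = W (I \<otimes> V) W\<^sup>\<dagger>\<close>, the difference \<open>\<rho> - \<rho>_f\<close> is conjugated by \<open>W\<close>
  as well, and the Frobenius norm is unitarily invariant; so the Fu distance is preserved.
  Applying the same to \<open>W\<^sup>\<dagger>\<close> shows that both suprema range over the same set of values.\<close>

lemma sum_lessThan_mult_split: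
  fixes f :: "nat \<Rightarrow> 'a::comm_monoid_add"
  shows "(\<Sum>j<M*N. f j) = (\<Sum>a<M. \<Sum>b<N. f (a*N+b))"
proof (induction M)
  case 0 then show ?case by simp
next
  case (Suc M)
  have "(\<Sum>j<Suc M*N. f j) = (\<Sum>j<M*N. f j) + (\<Sum>j\<in>{M*N..<M*N+N}. f j)"
    by (simp add: lessThan_atLeast0 sum.atLeastLessThan_concat add.commute)
  also have "(\<Sum>j\<in>{M*N..<M*N+N}. f j) = (\<Sum>b<N. f (M*N+b))"
    using sum.shift_bounds_nat_ivl[of f 0 "M*N" N] by (simp add: lessThan_atLeast0 add.commute)
  finally show ?case using Suc by simp
qed

lemma mult_add_less_mult:
  fixes i k M N :: nat
  assumes i: "i < M" and k: "k < N"
  shows "i*N+k < M*N"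
proof -
  have "i*N+k < (i+1)*N" using k by simp
  also have "\<dots> \<le> M*N" using i by (intro mult_le_mono1) simp
  finally show ?thesis .
qed

lemma sum_one_mat_row:
  assumes "i < n" shows "(\<Sum>a<n. 1\<^sub>m n $$ (i,a) * f a) = (f i :: 'a::semiring_1)"
proof -
  have "(\<Sum>a<n. 1\<^sub>m n $$ (i,a) * f a) = (\<Sum>a<n. if i = a then f a else 0)"
    using assms by (intro sum.cong) auto
  then show ?thesis using assms by simp
qed

lemma sum_one_mat_col:
  assumes "i < n" shows "(\<Sum>a<n. f a * 1\<^sub>m n $$ (a,i)) = (f i :: 'a::semiring_1)"
proof -
  have "(\<Sum>a<n. f a * 1\<^sub>m n $$ (a,i)) = (\<Sum>a<n. if a = i then f a else 0)"
    using assms by (intro sum.cong) auto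
  then show ?thesis using assms by simp
qed

lemma dagger_carrier [simp]: "A \<in> carrier_mat m n \<Longrightarrow> dagger A \<in> carrier_mat n m"
  by (auto simp: dagger_def)

lemma dagger_dims [simp]: "dim_row (dagger A) = dim_col A" "dim_col (dagger A) = dim_row A"
  by (auto simp: dagger_def)

lemma dagger_index [simp]: "i < dim_col A \<Longrightarrow> j < dim_row A \<Longrightarrow> dagger A $$ (i,j) = cnj (A $$ (j,i))"
  by (auto simp: dagger_def)

lemma dagger_dagger [simp]: "dagger (dagger A) = A"
  by (auto simp: dagger_def)

lemma dagger_mult:
  "A \<in> carrier_mat m n \<Longrightarrow> B \<in> carrier_mat n p \<Longrightarrow> dagger (A * B) = dagger B * dagger A"
  by (rule eq_matI) (auto simp: dagger_def scalar_prod_def mult.commute intro!: sum.cong)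

lemma dagger_conj:
  assumes "A \<in> carrier_mat m n" "B \<in> carrier_mat n n"
  shows "dagger (A * B * dagger A) = A * dagger B * dagger A"
proof -
  have "dagger (A * B * dagger A) = A * dagger (A * B)"
    using assms dagger_mult[of "A * B" m n "dagger A" m] by simp
  also have "\<dots> = A * (dagger B * dagger A)"
    using assms dagger_mult[of A m n B n] by simp
  finally show ?thesis
    using assms by (simp add: assoc_mult_mat[of _ m n _ n _ m])
qed

lemma kron_carrier [simp]:
  "A \<in> carrier_mat m n \<Longrightarrow> B \<in> carrier_mat p q \<Longrightarrow> kron A B \<in> carrier_mat (m * p) (n * q)"
  by (auto simp: kron_def)

lemma kron_dims [simp]:
  "dim_row (kron A B) = dim_row A * dim_row B" "dim_col (kron A B) = dim_col A * dim_col B"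
  by (auto simp: kron_def)

lemma kron_index:
  "i < dim_row A * dim_row B \<Longrightarrow> j < dim_col A * dim_col B \<Longrightarrow>
   kron A B $$ (i,j) = A $$ (i div dim_row B, j div dim_col B) * B $$ (i mod dim_row B, j mod dim_col B)"
  by (auto simp: kron_def)

lemma kron_index_mult_add:
  assumes "i < dim_row A" "k < dim_row B" "j < dim_col A" "l < dim_col B"
  shows "kron A B $$ (i * dim_row B + k, j * dim_col B + l) = A $$ (i,j) * B $$ (k,l)"
  using assms by (simp add: kron_index mult_add_less_mult)

lemma dagger_kron: "dagger (kron A B) = kron (dagger A) (dagger B)"
proof (rule eq_matI)
  fix i j assume "i < dim_row (kron (dagger A) (dagger B))" "j < dim_col (kron (dagger A) (dagger B))"
  hence i: "i < dim_col A * dim_col B" and j: "j < dim_row A * dim_row B" by auto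
  hence "dim_col B > 0" "dim_row B > 0"
    by (auto intro: Nat.gr0I)
  hence "i div dim_col B < dim_col A" "j div dim_row B < dim_row A"
    "i mod dim_col B < dim_col B" "j mod dim_row B < dim_row B"
    using i j by (auto simp: less_mult_imp_div_less)
  thus "dagger (kron A B) $$ (i, j) = kron (dagger A) (dagger B) $$ (i, j)"
    using i j by (simp add: kron_index)
qed auto

lemma kron_mult:
  assumes A: "A \<in> carrier_mat m1 n1" and B: "B \<in> carrier_mat m2 n2"
    and C: "C \<in> carrier_mat n1 p1" and D: "D \<in> carrier_mat n2 p2"
  shows "kron A B * kron C D = kron (A * C) (B * D)"
proof (rule eq_matI)
  fix i j assume "i < dim_row (kron (A * C) (B * D))" "j < dim_col (kron (A * C) (B * D))"
  hence i: "i < m1 * m2" and j: "j < p1 * p2" using assms by auto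
  hence "m2 > 0" "p2 > 0" by (auto intro: Nat.gr0I)
  hence ij: "i div m2 < m1" "i mod m2 < m2" "j div p2 < p1" "j mod p2 < p2"
    using i j by (auto simp: less_mult_imp_div_less mult.commute)
  have "(kron A B * kron C D) $$ (i,j) = (\<Sum>k<n1*n2. kron A B $$ (i,k) * kron C D $$ (k,j))"
    using i j assms by (simp add: scalar_prod_def lessThan_atLeast0)
  also have "\<dots> = (\<Sum>a<n1. \<Sum>b<n2. kron A B $$ (i, a*n2+b) * kron C D $$ (a*n2+b, j))"
    by (rule sum_lessThan_mult_split)
  also have "\<dots> = (\<Sum>a<n1. \<Sum>b<n2. (A $$ (i div m2, a) * C $$ (a, j div p2)) *
                                      (B $$ (i mod m2, b) * D $$ (b, j mod p2)))"
    using assms i j by (intro sum.cong refl) (simp add: kron_index mult_add_less_mult)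
  also have "\<dots> = (\<Sum>a<n1. A $$ (i div m2, a) * C $$ (a, j div p2)) *
                  (\<Sum>b<n2. B $$ (i mod m2, b) * D $$ (b, j mod p2))"
    by (simp add: sum_product)
  also have "\<dots> = kron (A * C) (B * D) $$ (i,j)"
    using assms i j ij by (simp add: kron_index scalar_prod_def lessThan_atLeast0)
  finally show "(kron A B * kron C D) $$ (i, j) = kron (A * C) (B * D) $$ (i, j)" .
qed (use assms in auto)

lemma kron_one: "kron (1\<^sub>m m) (1\<^sub>m n) = 1\<^sub>m (m * n)"
proof (rule eq_matI)
  fix i j assume "i < dim_row (1\<^sub>m (m * n))" "j < dim_col (1\<^sub>m (m * n))"
  hence i: "i < m * n" and j: "j < m * n" by auto
  hence "n > 0" by (auto intro: Nat.gr0I)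
  hence "i div n < m" "j div n < m" "i mod n < n" "j mod n < n"
    using i j by (auto simp: less_mult_imp_div_less)
  moreover have "(i div n = j div n \<and> i mod n = j mod n) = (i = j)"
    by (metis div_mult_mod_eq)
  ultimately show "kron (1\<^sub>m m) (1\<^sub>m n) $$ (i, j) = 1\<^sub>m (m * n) $$ (i, j)"
    using i j by (auto simp: kron_index)
qed auto

lemma unitaryD:
  assumes "unitary n U"
  shows "U \<in> carrier_mat n n" "dagger U \<in> carrier_mat n n"
    "U * dagger U = 1\<^sub>m n" "dagger U * U = 1\<^sub>m n"
  using assms by (auto simp: unitary_def)

lemma unitary_dagger: "unitary n U \<Longrightarrow> unitary n (dagger U)"
  by (auto simp: unitary_def)

lemma unitary_kron:
  assumes "unitary m A" "unitary n B"
  shows "unitary (m * n) (kron A B)"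
  using unitaryD[OF assms(1)] unitaryD[OF assms(2)]
  by (simp add: unitary_def dagger_kron kron_mult[of _ m m _ n n _ m _ n] kron_one carrier_matD)

lemma unitary_cancel_left:
  assumes "unitary n U" "dim_row X = n"
  shows "dagger U * (U * X) = X"
proof -
  have "X \<in> carrier_mat n (dim_col X)"
    using assms(2) by auto
  then show ?thesis
    using unitaryD[OF assms(1)] by (simp add: assoc_mult_mat[of "dagger U" n n U n X, symmetric])
qed

lemma unitary_conj_mult:
  assumes "unitary n W" "A \<in> carrier_mat n n" "B \<in> carrier_mat n n"
  shows "(W * A * dagger W) * (W * B * dagger W) = W * (A * B) * dagger W"
  using unitaryD[OF assms(1)] assms(2,3)
  by (simp add: assoc_mult_mat[of _ n n _ n _ n] unitary_cancel_left[OF assms(1)])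

lemma mult_minus_mult_distrib_mat:
  fixes A B :: "'a::ring mat"
  assumes "W \<in> carrier_mat m n" "A \<in> carrier_mat n p" "B \<in> carrier_mat n p" "C \<in> carrier_mat p q"
  shows "W * A * C - W * B * C = W * (A - B) * C"
  using assms by (simp add: mult_minus_distrib_mat[of W m n] minus_mult_distrib_mat[of _ m p])

lemma unitary_conj:
  assumes "unitary n U" "unitary n V"
  shows "unitary n (U * V * dagger U)"
  using unitaryD[OF assms(1)] unitaryD[OF assms(2)]
  by (simp add: unitary_def dagger_conj[of U n n] unitary_conj_mult[OF assms(1)]
      mult_carrier_mat[of _ n n _ n])

lemma tr_mult_comm:
  assumes "A \<in> carrier_mat m n" "B \<in> carrier_mat n m"
  shows "tr (A * B) = tr (B * A)"
  using assms unfolding tr_def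
  by (simp add: scalar_prod_def lessThan_atLeast0[symmetric] mult.commute sum.swap[of _ "{..<m}"])

lemma frob_nonneg: "frob X \<ge> 0"
  by (simp add: frob_def sum_nonneg)

lemma frob_square_eq_tr: "complex_of_real ((frob X)\<^sup>2) = tr (X * dagger X)"
  by (simp add: frob_def tr_def sum_nonneg scalar_prod_def lessThan_atLeast0[symmetric] of_real_sum
      complex_norm_square del: of_real_power)

lemma frob_unitary_conj:
  assumes W: "unitary n W" and X: "X \<in> carrier_mat n n"
  shows "frob (W * X * dagger W) = frob X"
proof -
  have "tr ((W * X * dagger W) * dagger (W * X * dagger W)) = tr ((W * (X * dagger X)) * dagger W)"
    using unitaryD[OF W] X by (simp add: dagger_conj[of W n n] unitary_conj_mult[OF W])
  also have "\<dots> = tr (dagger W * (W * (X * dagger X)))"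
    using unitaryD[OF W] X by (intro tr_mult_comm[of _ n n]) auto
  also have "\<dots> = tr (X * dagger X)"
    using X by (simp add: unitary_cancel_left[OF W])
  finally have "(frob (W * X * dagger W))\<^sup>2 = (frob X)\<^sup>2"
    by (simp only: frob_square_eq_tr[symmetric] of_real_eq_iff)
  then show ?thesis
    by (simp add: frob_nonneg power2_eq_iff_nonneg)
qed

lemma kron_mult_index:
  assumes A: "A \<in> carrier_mat m M" and B: "B \<in> carrier_mat p N" and Y: "Y \<in> carrier_mat (M*N) q"
    and "i < m" "k < p" "c < q"
  shows "(kron A B * Y) $$ (i*p+k, c) = (\<Sum>a<M. \<Sum>b<N. A $$ (i,a) * B $$ (k,b) * Y $$ (a*N+b, c))"
proof -
  have "(kron A B * Y) $$ (i*p+k, c) = (\<Sum>j<M*N. kron A B $$ (i*p+k, j) * Y $$ (j,c))"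
    using assms by (simp add: mult_add_less_mult scalar_prod_def lessThan_atLeast0)
  also have "\<dots> = (\<Sum>a<M. \<Sum>b<N. kron A B $$ (i*p+k, a*N+b) * Y $$ (a*N+b, c))"
    by (rule sum_lessThan_mult_split)
  also have "\<dots> = (\<Sum>a<M. \<Sum>b<N. A $$ (i,a) * B $$ (k,b) * Y $$ (a*N+b, c))"
    using assms kron_index_mult_add[of i A k B] by (intro sum.cong refl) auto
  finally show ?thesis .
qed

lemma mult_kron_index:
  assumes A: "A \<in> carrier_mat M m" and B: "B \<in> carrier_mat N p" and Y: "Y \<in> carrier_mat q (M*N)"
    and "j < m" "l < p" "r < q"
  shows "(Y * kron A B) $$ (r, j*p+l) = (\<Sum>a<M. \<Sum>b<N. Y $$ (r, a*N+b) * A $$ (a,j) * B $$ (b,l))"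
proof -
  have "(Y * kron A B) $$ (r, j*p+l) = (\<Sum>k<M*N. Y $$ (r,k) * kron A B $$ (k, j*p+l))"
    using assms by (simp add: mult_add_less_mult scalar_prod_def lessThan_atLeast0)
  also have "\<dots> = (\<Sum>a<M. \<Sum>b<N. Y $$ (r, a*N+b) * kron A B $$ (a*N+b, j*p+l))"
    by (rule sum_lessThan_mult_split)
  also have "\<dots> = (\<Sum>a<M. \<Sum>b<N. Y $$ (r, a*N+b) * A $$ (a,j) * B $$ (b,l))"
    using assms kron_index_mult_add[of _ A _ B j l] by (intro sum.cong refl) auto
  finally show ?thesis .
qed

lemma kron_one_left_mult_index:
  assumes "B \<in> carrier_mat N N" "Y \<in> carrier_mat (M*N) q" "i < M" "k < N" "c < q"
  shows "(kron (1\<^sub>m M) B * Y) $$ (i*N+k, c) = (\<Sum>b<N. B $$ (k,b) * Y $$ (i*N+b, c))"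
  using assms by (simp add: kron_mult_index[of _ M M] mult.assoc sum_distrib_left[symmetric]
      sum_one_mat_row del: index_one_mat)

lemma mult_kron_one_left_index:
  assumes "C \<in> carrier_mat N N" "Y \<in> carrier_mat q (M*N)" "j < M" "l < N" "r < q"
  shows "(Y * kron (1\<^sub>m M) C) $$ (r, j*N+l) = (\<Sum>b<N. Y $$ (r, j*N+b) * C $$ (b,l))"
proof -
  have "(Y * kron (1\<^sub>m M) C) $$ (r, j*N+l) =
      (\<Sum>b<N. \<Sum>a<M. Y $$ (r, a*N+b) * 1\<^sub>m M $$ (a,j) * C $$ (b,l))"
    using assms by (simp add: mult_kron_index[of _ M M] sum.swap[of _ "{..<M}"] del: index_one_mat)
  then show ?thesis
    using assms by (simp add: sum_distrib_right[symmetric] sum_one_mat_col del: index_one_mat)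
qed

lemma kron_one_right_mult_index:
  assumes "A \<in> carrier_mat M M" "Y \<in> carrier_mat (M*N) q" "i < M" "k < N" "c < q"
  shows "(kron A (1\<^sub>m N) * Y) $$ (i*N+k, c) = (\<Sum>a<M. A $$ (i,a) * Y $$ (a*N+k, c))"
  using assms by (simp add: kron_mult_index[of _ M M _ N N] mult.assoc
      sum_distrib_left[symmetric] sum_one_mat_row del: index_one_mat)

lemma mult_kron_one_right_index:
  assumes "A \<in> carrier_mat M M" "Y \<in> carrier_mat q (M*N)" "j < M" "l < N" "r < q"
  shows "(Y * kron A (1\<^sub>m N)) $$ (r, j*N+l) = (\<Sum>a<M. Y $$ (r, a*N+l) * A $$ (a,j))"
  using assms by (simp add: mult_kron_index[of _ M M _ N N] sum_one_mat_col del: index_one_mat)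

lemma ptrace_A_carrier [simp]: "ptrace_A M N X \<in> carrier_mat N N"
  by (simp add: ptrace_A_def)

lemma ptrace_A_dims [simp]: "dim_row (ptrace_A M N X) = N" "dim_col (ptrace_A M N X) = N"
  by (simp_all add: ptrace_A_def)

lemma ptrace_A_index: "k < N \<Longrightarrow> l < N \<Longrightarrow> ptrace_A M N X $$ (k,l) = (\<Sum>i<M. X $$ (i*N+k, i*N+l))"
  by (simp add: ptrace_A_def)

lemma ptrace_A_kron_one_left_mult:
  assumes B: "B \<in> carrier_mat N N" and Y: "Y \<in> carrier_mat (M*N) (M*N)"
  shows "ptrace_A M N (kron (1\<^sub>m M) B * Y) = B * ptrace_A M N Y"
proof (rule eq_matI)
  fix k l assume "k < dim_row (B * ptrace_A M N Y)" "l < dim_col (B * ptrace_A M N Y)"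
  hence k: "k < N" and l: "l < N" using B by auto
  have "ptrace_A M N (kron (1\<^sub>m M) B * Y) $$ (k,l) = (\<Sum>i<M. \<Sum>b<N. B $$ (k,b) * Y $$ (i*N+b, i*N+l))"
    unfolding ptrace_A_index[OF k l] using B Y k l
    by (intro sum.cong refl kron_one_left_mult_index) (auto simp: mult_add_less_mult)
  also have "\<dots> = (B * ptrace_A M N Y) $$ (k,l)"
    using B k l by (simp add: ptrace_A_index scalar_prod_def lessThan_atLeast0[symmetric]
        sum_distrib_left sum.swap[of _ "{..<M}"])
  finally show "ptrace_A M N (kron (1\<^sub>m M) B * Y) $$ (k,l) = (B * ptrace_A M N Y) $$ (k,l)" .
qed (use B in auto)

lemma ptrace_A_mult_kron_one_left:
  assumes C: "C \<in> carrier_mat N N" and Y: "Y \<in> carrier_mat (M*N) (M*N)"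
  shows "ptrace_A M N (Y * kron (1\<^sub>m M) C) = ptrace_A M N Y * C"
proof (rule eq_matI)
  fix k l assume "k < dim_row (ptrace_A M N Y * C)" "l < dim_col (ptrace_A M N Y * C)"
  hence k: "k < N" and l: "l < N" using C by auto
  have "ptrace_A M N (Y * kron (1\<^sub>m M) C) $$ (k,l) = (\<Sum>i<M. \<Sum>b<N. Y $$ (i*N+k, i*N+b) * C $$ (b,l))"
    unfolding ptrace_A_index[OF k l] using C Y k l
    by (intro sum.cong refl mult_kron_one_left_index) (auto simp: mult_add_less_mult)
  also have "\<dots> = (ptrace_A M N Y * C) $$ (k,l)"
    using C k l by (simp add: ptrace_A_index scalar_prod_def lessThan_atLeast0[symmetric]
        sum_distrib_right sum.swap[of _ "{..<M}"])
  finally show "ptrace_A M N (Y * kron (1\<^sub>m M) C) $$ (k,l) = (ptrace_A M N Y * C) $$ (k,l)" .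
qed (use C in auto)

lemma ptrace_A_kron_one_right_mult_comm:
  assumes A: "A \<in> carrier_mat M M" and Y: "Y \<in> carrier_mat (M*N) (M*N)"
  shows "ptrace_A M N (kron A (1\<^sub>m N) * Y) = ptrace_A M N (Y * kron A (1\<^sub>m N))"
proof (rule eq_matI)
  fix k l assume "k < dim_row (ptrace_A M N (Y * kron A (1\<^sub>m N)))"
    "l < dim_col (ptrace_A M N (Y * kron A (1\<^sub>m N)))"
  hence k: "k < N" and l: "l < N" by auto
  have "ptrace_A M N (kron A (1\<^sub>m N) * Y) $$ (k,l) = (\<Sum>i<M. \<Sum>a<M. A $$ (i,a) * Y $$ (a*N+k, i*N+l))"
    unfolding ptrace_A_index[OF k l] using A Y k l
    by (intro sum.cong refl kron_one_right_mult_index) (auto simp: mult_add_less_mult)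
  also have "\<dots> = (\<Sum>a<M. \<Sum>i<M. Y $$ (a*N+k, i*N+l) * A $$ (i,a))"
    by (subst sum.swap) (simp add: mult.commute)
  also have "\<dots> = ptrace_A M N (Y * kron A (1\<^sub>m N)) $$ (k,l)"
    unfolding ptrace_A_index[OF k l] using A Y k l
    by (intro sum.cong refl mult_kron_one_right_index[symmetric]) (auto simp: mult_add_less_mult)
  finally show "ptrace_A M N (kron A (1\<^sub>m N) * Y) $$ (k,l) = ptrace_A M N (Y * kron A (1\<^sub>m N)) $$ (k,l)" .
qed auto

lemma ptrace_A_kron_unitary_conj:
  assumes U1: "unitary M U1" and U2: "unitary N U2" and Y: "Y \<in> carrier_mat (M*N) (M*N)"
  shows "ptrace_A M N (kron U1 U2 * Y * dagger (kron U1 U2)) = U2 * ptrace_A M N Y * dagger U2"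
proof -
  note U1D = unitaryD[OF U1] and U2D = unitaryD[OF U2]
  define K1 where "K1 = kron U1 (1\<^sub>m N)"
  define K1' where "K1' = kron (dagger U1) (1\<^sub>m N)"
  define Z where "Z = kron (1\<^sub>m M) U2 * (Y * kron (1\<^sub>m M) (dagger U2))"
  have K: "K1 \<in> carrier_mat (M*N) (M*N)" "K1' \<in> carrier_mat (M*N) (M*N)"
    using U1D by (simp_all add: K1_def K1'_def)
  have K2: "kron (1\<^sub>m M) U2 \<in> carrier_mat (M*N) (M*N)"
    "kron (1\<^sub>m M) (dagger U2) \<in> carrier_mat (M*N) (M*N)"
    using U2D by simp_all
  have Z: "Z \<in> carrier_mat (M*N) (M*N)"
    using U2D Y by (simp add: Z_def mult_carrier_mat[of _ "M*N" "M*N"])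
  have W: "kron U1 U2 = K1 * kron (1\<^sub>m M) U2"
    using U1D U2D by (simp add: K1_def kron_mult[of _ M M _ N N _ M _ N])
  have dW: "dagger (kron U1 U2) = kron (1\<^sub>m M) (dagger U2) * K1'"
    using U1D U2D by (simp add: K1'_def dagger_kron kron_mult[of _ M M _ N N _ M _ N])
  have "K1' * K1 = 1\<^sub>m (M*N)"
    using U1D by (simp add: K1_def K1'_def kron_mult[of _ M M _ N N _ M _ N] kron_one)
  then have Z_cancel: "Z * K1' * K1 = Z"
    using Z K by (simp add: assoc_mult_mat[of _ "M*N" "M*N" _ "M*N" _ "M*N"])
  have "kron U1 U2 * Y * dagger (kron U1 U2) = K1 * (Z * K1')"
    unfolding dW unfolding W Z_def
    using K2 Y K by (simp add: assoc_mult_mat[of _ "M*N" "M*N" _ "M*N" _ "M*N"])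
  then have "ptrace_A M N (kron U1 U2 * Y * dagger (kron U1 U2)) = ptrace_A M N (Z * K1' * K1)"
    using U1D Z K by (simp add: K1_def ptrace_A_kron_one_right_mult_comm)
  also have "\<dots> = ptrace_A M N Z"
    by (simp only: Z_cancel)
  also have "ptrace_A M N Z = U2 * ptrace_A M N Y * dagger U2"
    using U2D Y by (simp add: Z_def ptrace_A_kron_one_left_mult ptrace_A_mult_kron_one_left
        mult_carrier_mat[of _ "M*N" "M*N"] assoc_mult_mat[of U2 N N _ N _ N])
  finally show ?thesis .
qed

lemma cyclic_unitary_kron_unitary_conj:
  assumes \<rho>: "\<rho> \<in> carrier_mat (M*N) (M*N)" and U1: "unitary M U1" and U2: "unitary N U2"
    and V: "cyclic_unitary M N \<rho> V"
  shows "cyclic_unitary M N (kron U1 U2 * \<rho> * dagger (kron U1 U2)) (U2 * V * dagger U2)"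
proof -
  have unitary_V: "unitary N V" and comm: "ptrace_A M N \<rho> * V = V * ptrace_A M N \<rho>"
    using V by (auto simp: cyclic_unitary_def)
  have P: "ptrace_A M N \<rho> \<in> carrier_mat N N"
    by auto
  have "(U2 * ptrace_A M N \<rho> * dagger U2) * (U2 * V * dagger U2)
      = (U2 * V * dagger U2) * (U2 * ptrace_A M N \<rho> * dagger U2)"
    using unitaryD[OF unitary_V] P comm by (simp add: unitary_conj_mult[OF U2])
  then show ?thesis
    using unitary_conj[OF U2 unitary_V]
    by (simp add: cyclic_unitary_def ptrace_A_kron_unitary_conj[OF U1 U2 \<rho>])
qed

lemma fu_dist_kron_unitary_conj:
  assumes \<rho>: "\<rho> \<in> carrier_mat (M*N) (M*N)" and U1: "unitary M U1" and U2: "unitary N U2"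
    and V: "V \<in> carrier_mat N N"
  shows "fu_dist M N (kron U1 U2 * \<rho> * dagger (kron U1 U2)) (U2 * V * dagger U2) = fu_dist M N \<rho> V"
proof -
  define W where "W = kron U1 U2"
  define K where "K = kron (1\<^sub>m M) V"
  have W: "unitary (M*N) W"
    unfolding W_def by (rule unitary_kron[OF U1 U2])
  note WD = unitaryD[OF W]
  have K: "K \<in> carrier_mat (M*N) (M*N)"
    using V by (simp add: K_def)
  have K': "kron (1\<^sub>m M) (U2 * V * dagger U2) = W * K * dagger W"
    using unitaryD[OF U1] unitaryD[OF U2] V
    by (simp add: W_def K_def dagger_kron kron_mult[of _ M M _ N N _ M _ N])
  have "(W * K * dagger W) * (W * \<rho> * dagger W) * dagger (W * K * dagger W)
      = (W * (K * \<rho>) * dagger W) * (W * dagger K * dagger W)"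
    using WD K \<rho> by (simp only: unitary_conj_mult[OF W] dagger_conj)
  also have "\<dots> = W * (K * \<rho> * dagger K) * dagger W"
    using K \<rho> by (intro unitary_conj_mult[OF W]) auto
  finally have conj: "(W * K * dagger W) * (W * \<rho> * dagger W) * dagger (W * K * dagger W)
      = W * (K * \<rho> * dagger K) * dagger W" .
  have "W * \<rho> * dagger W - kron (1\<^sub>m M) (U2 * V * dagger U2) * (W * \<rho> * dagger W) *
      dagger (kron (1\<^sub>m M) (U2 * V * dagger U2)) = W * (\<rho> - K * \<rho> * dagger K) * dagger W"
    unfolding K' conj using WD K \<rho> by (intro mult_minus_mult_distrib_mat) auto
  moreover have "\<rho> - K * \<rho> * dagger K \<in> carrier_mat (M*N) (M*N)"
    using K \<rho> by auto
  ultimately show ?thesis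
    by (simp add: fu_dist_def W_def[symmetric] K_def[symmetric] frob_unitary_conj[OF W])
qed

lemma cyclic_fu_dist_values_subset_kron_conj:
  assumes \<rho>: "\<rho> \<in> carrier_mat (M*N) (M*N)" and U1: "unitary M U1" and U2: "unitary N U2"
  defines "\<rho>' \<equiv> kron U1 U2 * \<rho> * dagger (kron U1 U2)"
  shows "{fu_dist M N \<rho> V | V. cyclic_unitary M N \<rho> V} \<subseteq> {fu_dist M N \<rho>' V | V. cyclic_unitary M N \<rho>' V}"
proof
  fix x assume "x \<in> {fu_dist M N \<rho> V | V. cyclic_unitary M N \<rho> V}"
  then obtain V where x: "x = fu_dist M N \<rho> V" and V: "cyclic_unitary M N \<rho> V"
    by blast
  have "V \<in> carrier_mat N N"
    using V by (simp add: cyclic_unitary_def unitary_def)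
  then have "x = fu_dist M N \<rho>' (U2 * V * dagger U2)"
    unfolding x \<rho>'_def by (rule fu_dist_kron_unitary_conj[OF \<rho> U1 U2, symmetric])
  moreover have "cyclic_unitary M N \<rho>' (U2 * V * dagger U2)"
    unfolding \<rho>'_def by (rule cyclic_unitary_kron_unitary_conj[OF \<rho> U1 U2 V])
  ultimately show "x \<in> {fu_dist M N \<rho>' V | V. cyclic_unitary M N \<rho>' V}"
    by blast
qed

lemma kron_dagger_conj_cancel:
  assumes \<rho>: "\<rho> \<in> carrier_mat (M*N) (M*N)" and U1: "unitary M U1" and U2: "unitary N U2"
  shows "kron (dagger U1) (dagger U2) * (kron U1 U2 * \<rho> * dagger (kron U1 U2)) *
    dagger (kron (dagger U1) (dagger U2)) = \<rho>"
proof -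
  have W: "unitary (M*N) (dagger (kron U1 U2))"
    by (rule unitary_dagger[OF unitary_kron[OF U1 U2]])
  show ?thesis
    using unitaryD[OF W] \<rho>
    by (simp add: dagger_kron[symmetric] assoc_mult_mat[of _ "M*N" "M*N" _ "M*N" _ "M*N"]
        unitary_cancel_left[OF unitary_dagger[OF W], simplified])
qed

theorem lemma2:
  fixes M N :: nat and \<rho> U1 U2 :: "complex mat"
  assumes "is_state M N \<rho>" and "unitary M U1" and "unitary N U2"
  shows "d_max M N (kron U1 U2 * \<rho> * dagger (kron U1 U2)) = d_max M N \<rho>"
proof -
  define \<rho>' where "\<rho>' = kron U1 U2 * \<rho> * dagger (kron U1 U2)"
  have \<rho>: "\<rho> \<in> carrier_mat (M*N) (M*N)"
    using assms(1) by (simp add: is_state_def)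
  then have \<rho>': "\<rho>' \<in> carrier_mat (M*N) (M*N)"
    using unitaryD[OF unitary_kron[OF assms(2,3)]]
    by (simp add: \<rho>'_def mult_carrier_mat[of _ "M*N" "M*N"])
  have "{fu_dist M N \<rho> V | V. cyclic_unitary M N \<rho> V} \<subseteq> {fu_dist M N \<rho>' V | V. cyclic_unitary M N \<rho>' V}"
    unfolding \<rho>'_def by (rule cyclic_fu_dist_values_subset_kron_conj[OF \<rho> assms(2,3)])
  moreover have "{fu_dist M N \<rho>' V | V. cyclic_unitary M N \<rho>' V} \<subseteq> {fu_dist M N \<rho> V | V. cyclic_unitary M N \<rho> V}"
    using cyclic_fu_dist_values_subset_kron_conj[OF \<rho>' unitary_dagger[OF assms(2)] unitary_dagger[OF assms(3)]]
    by (simp add: \<rho>'_def kron_dagger_conj_cancel[OF \<rho> assms(2,3)])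
  ultimately have "{fu_dist M N \<rho> V | V. cyclic_unitary M N \<rho> V} = {fu_dist M N \<rho>' V | V. cyclic_unitary M N \<rho>' V}"
    by (rule subset_antisym)
  then show ?thesis
    by (simp add: d_max_def \<rho>'_def)
qed

end
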